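(* $$\int_0^{\pi/2} x^2\sec(x)\ln(\sin(x))\,dx = \frac{45}{16}\zeta(4)-4G^2.$$
   Context: $\zeta$ denotes the Riemann zeta function and $G=\sum_{k\ge1}(-1)^{k+1}/(2k-1)^2$ is Catalan's constant. *)

theory Defs
  imports "HOL-Analysis.Analysis"
begin

definition zeta :: "real \<Rightarrow> real" where
  "zeta s = (\<Sum>n. 1 / (real (Suc n)) powr s)"

text \<open>Catalan's constant G = sum over k \<ge> 1 of (-1)^(k+1)/(2k-1)^2 (reindexed from k = 0).\<close>
definition catalan :: real where
  "catalan = (\<Sum>k. (-1) ^ k / (2 * real k + 1) ^ 2)"

end

theory Submission
  imports Defs
begin

(*
  Let K(x,u) = 4u(1-u^2) cos x / ((1+u^2)(1 - 2u^2 cos 2x + u^4)). For 0 < x < pi/2 we have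
  int_0^1 K(x,u) du = -ln(sin x)/cos x, since K is the u-derivative of
  (ln(1+u^2) - ln(1 - 2u^2 cos 2x + u^4)/2)/cos x. On the other hand
  K(x,u) = 4u/(1+u^2) sum_N u^(2N) cos((2N+1)x), and integrating x^2 cos((2N+1)x) termwise gives
  int_0^(pi/2) x^2 K(x,u) dx = 4/(1+u^2) (pi^2/4 arctan u - 2 Ti_3(u)),
  where Ti_s(u) = sum_k (-1)^k u^(2k+1)/(2k+1)^s. As Ti_3' = Ti_2/u and Ti_2' = arctan/u, the latter
  has the antiderivative pi^2/2 arctan^2 - 8 Ti_3 arctan + 4 Ti_2^2, so by Tonelli the integral is
  -(pi^4/32 - 2 pi Ti_3(1) + 4 G^2). Finally Ti_3(1) = pi^3/32 and zeta(4) = pi^4/90 follow from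
  the reflection formula for the polygamma functions.
*)

lemma DERIV_unique_on_open:
  fixes f g :: "real \<Rightarrow> real"
  assumes "(f has_real_derivative a) (at x)" "(g has_real_derivative b) (at x)"
    and "open S" "x \<in> S" "\<And>y. y \<in> S \<Longrightarrow> f y = g y"
  shows "a = b"
  using has_field_derivative_transform_within_open[OF assms(1,3,4,5)] assms(2)
  by (rule DERIV_unique)

lemma has_integral_swap_nonneg:
  fixes f :: "'a::euclidean_space \<Rightarrow> 'b::euclidean_space \<Rightarrow> real"
  assumes S: "S \<in> sets lborel" and T: "T \<in> sets lborel"
    and f_meas: "(\<lambda>(x, y). f x y) \<in> borel_measurable (lborel \<Otimes>\<^sub>M lborel)"
    and nonneg: "\<And>x y. x \<in> S \<Longrightarrow> y \<in> T \<Longrightarrow> 0 \<le> f x y"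
    and g: "\<And>x. x \<in> S \<Longrightarrow> ((\<lambda>y. f x y) has_integral g x) T"
    and h: "\<And>y. y \<in> T \<Longrightarrow> ((\<lambda>x. f x y) has_integral h y) S"
    and V: "(h has_integral V) T"
  shows "(g has_integral V) S"
proof -
  define F where "F x y = ennreal (indicator S x * (indicator T y * f x y))" for x y
  have F_meas: "(\<lambda>(x, y). F x y) \<in> borel_measurable (lborel \<Otimes>\<^sub>M lborel)"
    unfolding F_def using S T f_meas by measurable
  have g_nonneg: "0 \<le> g x" if "x \<in> S" for x
    using has_integral_nonneg[OF g[OF that]] nonneg that by auto
  have h_nonneg: "0 \<le> h y" if "y \<in> T" for y
    using has_integral_nonneg[OF h[OF that]] nonneg that by auto
  have inner_x: "(\<integral>\<^sup>+y. F x y \<partial>lborel) = ennreal (indicator S x * g x)" for x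
  proof (cases "x \<in> S")
    case True
    thus ?thesis
      using nn_integral_has_integral_lebesgue[OF nonneg g, OF True _ True] by (simp add: F_def)
  qed (simp add: F_def)
  have inner_y: "(\<integral>\<^sup>+x. F x y \<partial>lborel) = ennreal (indicator T y * h y)" for y
  proof (cases "y \<in> T")
    case True
    thus ?thesis
      using nn_integral_has_integral_lebesgue[OF nonneg h, OF _ True True] by (simp add: F_def mult.left_commute)
  qed (simp add: F_def)
  have "(\<integral>\<^sup>+x. ennreal (indicator S x * g x) \<partial>lborel) = (\<integral>\<^sup>+x. (\<integral>\<^sup>+y. F x y \<partial>lborel) \<partial>lborel)"
    by (simp add: inner_x)
  also have "\<dots> = (\<integral>\<^sup>+y. (\<integral>\<^sup>+x. F x y \<partial>lborel) \<partial>lborel)"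
    using F_meas by (intro lborel_pair.Fubini' [symmetric]) simp
  also have "\<dots> = ennreal V"
    unfolding inner_y using h_nonneg V by (intro nn_integral_has_integral_lebesgue) auto
  finally have "(\<integral>\<^sup>+x. ennreal (indicator S x * g x) \<partial>lborel) = ennreal V" .
  moreover have "0 \<le> V"
    using has_integral_nonneg[OF V] h_nonneg by auto
  moreover have "(\<lambda>x. indicator S x * g x) \<in> borel_measurable borel"
  proof -
    have "(\<lambda>x. enn2real (\<integral>\<^sup>+y. F x y \<partial>lborel)) \<in> borel_measurable lborel"
      using F_meas by measurable
    thus ?thesis using g_nonneg by (simp add: inner_x indicator_def)
  qed
  ultimately have "((\<lambda>x. indicator S x * g x) has_integral V) UNIV"
    using g_nonneg by (intro nn_integral_has_integral) (auto simp: indicator_def)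
  moreover have "(\<lambda>x. indicator S x * g x) = (\<lambda>x. if x \<in> S then g x else 0)"
    by (auto simp: indicator_def)
  ultimately show ?thesis
    by (simp add: has_integral_restrict_UNIV)
qed

section \<open>Polygamma reflection formulas and special values\<close>

lemma Gamma_reflection_real:
  assumes "0 < x" "x < 1"
  shows "Gamma x * Gamma (1 - x) * sin (pi * x) = pi"
proof -
  have "Gamma (complex_of_real x) * Gamma (1 - complex_of_real x) = of_real pi / sin (of_real pi * of_real x)"
    by (rule Gamma_reflection_complex)
  hence "complex_of_real (Gamma x * Gamma (1 - x)) = complex_of_real (pi / sin (pi * x))"
    by (simp flip: Gamma_complex_of_real sin_of_real)
  moreover have "sin (pi * x) > 0" using assms by (intro sin_gt_zero) auto
  ultimately show ?thesis by (simp only: of_real_eq_iff) (simp add: field_simps)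
qed

(* Each of the following reflection formulas is the derivative of the preceding one. *)

lemma Digamma_reflection_real:
  assumes x: "0 < x" "x < 1"
  shows "Digamma (1 - x) - Digamma x = pi * cos (pi * x) / sin (pi * x)"
proof -
  have "((\<lambda>y. Gamma y * Gamma (1 - y) * sin (pi * y)) has_real_derivative
        (Gamma x * Digamma x * Gamma (1 - x) - Gamma (1 - x) * Digamma (1 - x) * Gamma x) * sin (pi * x)
         + cos (pi * x) * pi * (Gamma x * Gamma (1 - x))) (at x)"
    using x by (auto intro!: derivative_eq_intros simp: nonpos_Ints_def algebra_simps)
  from this DERIV_const have "(Gamma x * Digamma x * Gamma (1 - x) - Gamma (1 - x) * Digamma (1 - x) * Gamma x) * sin (pi * x)
         + cos (pi * x) * pi * (Gamma x * Gamma (1 - x)) = 0"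
    by (rule DERIV_unique_on_open[where S = "{0<..<1}"]) (use x Gamma_reflection_real in auto)
  hence "(Gamma x * Gamma (1 - x)) * ((Digamma x - Digamma (1 - x)) * sin (pi * x) + pi * cos (pi * x)) = 0"
    by (simp add: algebra_simps)
  moreover have "Gamma x > 0" "Gamma (1 - x) > 0"
    using x by simp_all
  ultimately have "(Digamma x - Digamma (1 - x)) * sin (pi * x) + pi * cos (pi * x) = 0"
    by (metis mult_eq_0_iff less_irrefl)
  moreover have "sin (pi * x) > 0"
    using x by (intro sin_gt_zero) auto
  ultimately show ?thesis by (simp add: field_simps)
qed

lemma Polygamma_1_reflection_real:
  assumes x: "0 < x" "x < 1"
  shows "Polygamma 1 (1 - x) + Polygamma 1 x = pi ^ 2 / sin (pi * x) ^ 2"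
proof -
  have s: "sin (pi * x) \<noteq> 0" using x by (intro sin_gt_zero [THEN less_imp_neq, symmetric]) auto
  have "((\<lambda>y. Digamma (1 - y) - Digamma y) has_real_derivative - Polygamma 1 (1 - x) - Polygamma 1 x) (at x)"
    using x by (auto intro!: derivative_eq_intros simp: nonpos_Ints_def)
  moreover have "((\<lambda>y. pi * cos (pi * y) / sin (pi * y)) has_real_derivative (- (pi ^ 2) / sin (pi * x) ^ 2)) (at x)"
  proof -
    have "((\<lambda>y. pi * cos (pi * y) / sin (pi * y)) has_real_derivative
        (pi * (- sin (pi * x) * pi) * sin (pi * x) - pi * cos (pi * x) * (cos (pi * x) * pi))
          / (sin (pi * x) * sin (pi * x))) (at x)"
      using s by (auto intro!: derivative_eq_intros simp: algebra_simps)
    also have "pi * (- sin (pi * x) * pi) * sin (pi * x) - pi * cos (pi * x) * (cos (pi * x) * pi)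
        = - (pi ^ 2) * (sin (pi * x) ^ 2 + cos (pi * x) ^ 2)"
      by (simp only: power2_eq_square) algebra
    finally show ?thesis by (simp flip: power2_eq_square)
  qed
  ultimately have "- Polygamma 1 (1 - x) - Polygamma 1 x = - (pi ^ 2) / sin (pi * x) ^ 2"
    by (rule DERIV_unique_on_open[where S = "{0<..<1}"]) (use x Digamma_reflection_real in auto)
  thus ?thesis by simp
qed

lemma Polygamma_2_reflection_real:
  assumes x: "0 < x" "x < 1"
  shows "Polygamma 2 (1 - x) - Polygamma 2 x = 2 * pi ^ 3 * cos (pi * x) / sin (pi * x) ^ 3"
proof -
  have s: "sin (pi * x) \<noteq> 0" using x by (intro sin_gt_zero [THEN less_imp_neq, symmetric]) auto
  have "((\<lambda>y. Polygamma 1 (1 - y) + Polygamma 1 y) has_real_derivative Polygamma 2 (1 - x) * (- 1) + Polygamma 2 x) (at x)"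
    using x by (auto intro!: derivative_eq_intros simp: nonpos_Ints_def numeral_2_eq_2)
  moreover have "((\<lambda>y. pi ^ 2 / sin (pi * y) ^ 2) has_real_derivative (- 2 * pi ^ 3 * cos (pi * x) / sin (pi * x) ^ 3)) (at x)"
    using s by (auto intro!: derivative_eq_intros simp: field_simps power2_eq_square power3_eq_cube)
  ultimately have "Polygamma 2 (1 - x) * (- 1) + Polygamma 2 x = - 2 * pi ^ 3 * cos (pi * x) / sin (pi * x) ^ 3"
    by (rule DERIV_unique_on_open[where S = "{0<..<1}"]) (use x Polygamma_1_reflection_real in auto)
  thus ?thesis by simp
qed

lemma Polygamma_3_half: "Polygamma 3 (1 / 2 :: real) = pi ^ 4"
proof -
  have "((\<lambda>y. Polygamma 2 (1 - y) - Polygamma 2 y) has_real_derivative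
      - Polygamma 3 (1 - 1 / 2) - Polygamma 3 (1 / 2 :: real)) (at (1 / 2))"
    by (auto intro!: derivative_eq_intros simp: nonpos_Ints_def numeral_3_eq_3)
  moreover have "((\<lambda>y. 2 * pi ^ 3 * cos (pi * y) / sin (pi * y) ^ 3) has_real_derivative (- 2 * pi ^ 4)) (at (1 / 2))"
    by (auto intro!: derivative_eq_intros simp: field_simps power2_eq_square power3_eq_cube power4_eq_xxxx)
  ultimately have "- Polygamma 3 (1 - 1 / 2) - Polygamma 3 (1 / 2 :: real) = - 2 * pi ^ 4"
    by (rule DERIV_unique_on_open[where S = "{0<..<1}"]) (use Polygamma_2_reflection_real in auto)
  thus ?thesis by simp
qed

lemma Polygamma_2_reflection_quarter: "Polygamma 2 (3 / 4) - Polygamma 2 (1 / 4 :: real) = 4 * pi ^ 3"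
proof -
  have "Polygamma 2 (1 - 1 / 4) - Polygamma 2 (1 / 4 :: real)
      = 2 * pi ^ 3 * cos (pi * (1 / 4)) / sin (pi * (1 / 4)) ^ 3"
    by (rule Polygamma_2_reflection_real) auto
  also have "\<dots> = 4 * pi ^ 3"
    by (simp add: sin_45 cos_45 power3_eq_cube field_simps)
  finally show ?thesis by simp
qed

lemma zeta_sums:
  assumes "2 \<le> m"
  shows "(\<lambda>n. 1 / (real n + 1) ^ m) sums zeta (real m)"
proof -
  have "summable (\<lambda>n. inverse (real (Suc n) ^ m))"
    using inverse_power_summable[OF assms, where 'a = real] by (subst summable_Suc_iff)
  hence "summable (\<lambda>n. 1 / (real n + 1) ^ m)"
    by (simp add: inverse_eq_divide add.commute)
  moreover have "(\<lambda>n. 1 / real (Suc n) powr real m) = (\<lambda>n. 1 / (real n + 1) ^ m)"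
    by (simp add: powr_realpow add.commute)
  ultimately show ?thesis by (simp add: zeta_def summable_sums)
qed

lemma inverse_odd_powers_sums:
  assumes "2 \<le> m"
  shows "(\<lambda>k. 1 / (2 * real k + 1) ^ m) sums ((1 - 1 / 2 ^ m) * zeta (real m))"
proof -
  define f where "f = (\<lambda>n. 1 / (real n + 1) ^ m)"
  have f_sums: "f sums zeta (real m)"
    unfolding f_def using zeta_sums[OF assms] .
  have "(\<lambda>n. sum f {n * 2..<n * 2 + 2}) sums zeta (real m)"
    using sums_group[OF f_sums, of 2] by simp
  moreover have "sum f {n * 2..<n * 2 + 2} = 1 / (2 * real n + 1) ^ m + f n / 2 ^ m" for n
  proof -
    have "{n * 2..<n * 2 + 2} = {2 * n, 2 * n + 1}" by auto
    moreover have "(2 * real n + 2) ^ m = 2 ^ m * (real n + 1) ^ m"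
      by (simp flip: power_mult_distrib add: algebra_simps)
    ultimately show ?thesis by (simp add: f_def algebra_simps)
  qed
  ultimately have "(\<lambda>n. 1 / (2 * real n + 1) ^ m + f n / 2 ^ m) sums zeta (real m)" by simp
  moreover have "(\<lambda>n. f n / 2 ^ m) sums (zeta (real m) / 2 ^ m)"
    using f_sums by (rule sums_divide)
  ultimately have "(\<lambda>n. 1 / (2 * real n + 1) ^ m + f n / 2 ^ m - f n / 2 ^ m)
      sums (zeta (real m) - zeta (real m) / 2 ^ m)"
    by (rule sums_diff)
  thus ?thesis by (simp add: algebra_simps)
qed

lemma zeta_4: "zeta 4 = pi ^ 4 / 90"
proof -
  have "(\<lambda>k. inverse ((1 / 2 + real k) ^ Suc 3)) sums ((-1) ^ Suc 3 * Polygamma 3 (1 / 2 :: real) / fact 3)"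
    by (rule Polygamma_LIMSEQ) auto
  hence "(\<lambda>k. inverse ((1 / 2 + real k) ^ Suc 3) / 16) sums ((-1) ^ Suc 3 * Polygamma 3 (1 / 2 :: real) / fact 3 / 16)"
    by (rule sums_divide)
  hence "(\<lambda>k. inverse ((1 / 2 + real k) ^ 4) / 16) sums (pi ^ 4 / 96)"
    by (simp add: Polygamma_3_half fact_numeral)
  moreover have "inverse ((1 / 2 + real k) ^ 4) / 16 = 1 / (2 * real k + 1) ^ 4" for k
  proof -
    have "(2 * real k + 1) ^ 4 = 16 * (1 / 2 + real k) ^ 4"
      by (simp only: power4_eq_xxxx) algebra
    thus ?thesis by (simp add: field_simps)
  qed
  ultimately have "(\<lambda>k. 1 / (2 * real k + 1) ^ 4) sums (pi ^ 4 / 96)" by simp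
  with inverse_odd_powers_sums[of 4] have "(1 - 1 / 2 ^ 4) * zeta 4 = pi ^ 4 / 96"
    by (simp add: sums_iff)
  thus ?thesis by simp
qed

section \<open>Generalised inverse tangent integrals\<close>

lemma odd_powser_has_real_derivative:
  fixes c :: "nat \<Rightarrow> real"
  assumes c: "\<And>k. \<bar>c k * (2 * real k + 1)\<bar> \<le> 1" and u: "\<bar>u\<bar> < 1"
  shows "((\<lambda>x. \<Sum>k. c k * x ^ (2 * k + 1)) has_real_derivative
           (\<Sum>k. c k * (2 * real k + 1) * u ^ (2 * k))) (at u)"
proof -
  define r where "r = (1 + \<bar>u\<bar>) / 2"
  have r: "\<bar>u\<bar> < r" "r < 1" using u by (auto simp: r_def)
  have der: "((\<lambda>x. c k * x ^ (2 * k + 1)) has_field_derivative c k * (2 * real k + 1) * x ^ (2 * k))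
               (at x within {-r..r})" for k x
    using DERIV_cmult[OF DERIV_pow[of "2 * k + 1" x "{-r..r}"], of "c k"] by (simp add: mult.assoc add.commute)
  have bound: "norm (c k * (2 * real k + 1) * x ^ (2 * k)) \<le> (r ^ 2) ^ k" if "x \<in> {-r..r}" for k x
  proof -
    have "\<bar>x\<bar> ^ (2 * k) \<le> r ^ (2 * k)" using that by (intro power_mono) auto
    hence "\<bar>c k * (2 * real k + 1)\<bar> * \<bar>x\<bar> ^ (2 * k) \<le> 1 * r ^ (2 * k)"
      using c[of k] by (intro mult_mono) auto
    thus ?thesis by (simp add: abs_mult power_abs power_mult)
  qed
  have "summable (\<lambda>k. (r ^ 2) ^ k)"
    using r by (intro summable_geometric) (simp add: abs_square_less_1)
  hence "uniformly_convergent_on {-r..r} (\<lambda>n x. \<Sum>k<n. c k * (2 * real k + 1) * x ^ (2 * k))"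
    using bound by (intro Weierstrass_m_test') auto
  moreover have "u \<in> interior {-r..r}" using r by auto
  ultimately show ?thesis
    using r by (intro has_field_derivative_series'(2)[OF convex_real_interval(5) der, of _ 0]) auto
qed

lemma odd_powser_continuous_on:
  fixes c :: "nat \<Rightarrow> real"
  assumes "summable (\<lambda>k. \<bar>c k\<bar>)"
  shows "continuous_on {-1..1} (\<lambda>x. \<Sum>k. c k * x ^ (2 * k + 1))"
proof (rule uniform_limit_theorem[where F = sequentially])
  have "norm (c k * x ^ (2 * k + 1)) \<le> \<bar>c k\<bar>" if "x \<in> {-1..1}" for k x
  proof -
    have "\<bar>x\<bar> ^ (2 * k + 1) \<le> 1" using that by (intro power_le_one) auto
    thus ?thesis by (simp add: abs_mult power_abs mult_left_le)
  qed
  thus "uniform_limit {-1..1} (\<lambda>n x. \<Sum>k<n. c k * x ^ (2 * k + 1)) (\<lambda>x. \<Sum>k. c k * x ^ (2 * k + 1)) sequentially"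
    using assms by (rule Weierstrass_m_test)
qed (auto intro!: always_eventually continuous_intros)

lemma summable_inverse_odd_powers:
  assumes "2 \<le> s"
  shows "summable (\<lambda>k. 1 / (2 * real k + 1) ^ s)"
proof (rule summable_comparison_test)
  show "summable (\<lambda>k. inverse (real (Suc k) ^ s))"
    using inverse_power_summable[OF assms, where 'a = real] by (subst summable_Suc_iff)
  have "(1 + real k) ^ s \<le> (2 * real k + 1) ^ s" for k
    by (intro power_mono) auto
  thus "\<exists>N. \<forall>k\<ge>N. norm (1 / (2 * real k + 1) ^ s) \<le> inverse (real (Suc k) ^ s)"
    by (simp add: divide_simps add_pos_nonneg)
qed

definition Ti :: "nat \<Rightarrow> real \<Rightarrow> real" where
  "Ti s u = (\<Sum>k. (-1) ^ k * u ^ (2 * k + 1) / (2 * real k + 1) ^ s)"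

lemma Ti_sums:
  assumes "\<bar>u\<bar> \<le> 1" "1 \<le> s"
  shows "(\<lambda>k. (-1) ^ k * u ^ (2 * k + 1) / (2 * real k + 1) ^ s) sums Ti s u"
proof (cases "s = 1")
  case True
  have "summable (\<lambda>k. (-1) ^ k * (1 / real (k * 2 + 1) * u ^ (k * 2 + 1)))"
    using summable_arctan_series[OF assms(1)] .
  thus ?thesis by (simp add: True Ti_def summable_sums mult.commute add.commute)
next
  case False
  have "summable (\<lambda>k. (-1) ^ k * u ^ (2 * k + 1) / (2 * real k + 1) ^ s)"
  proof (rule summable_comparison_test[OF _ summable_inverse_odd_powers], intro exI allI impI)
    fix k :: nat
    have "\<bar>u\<bar> ^ (2 * k + 1) \<le> 1" using assms by (intro power_le_one) auto
    thus "norm ((-1) ^ k * u ^ (2 * k + 1) / (2 * real k + 1) ^ s) \<le> 1 / (2 * real k + 1) ^ s"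
      by (simp add: abs_mult power_abs divide_right_mono)
  qed (use assms False in auto)
  thus ?thesis by (simp add: Ti_def summable_sums)
qed

lemma Ti_1_eq_arctan: "\<bar>u\<bar> \<le> 1 \<Longrightarrow> Ti 1 u = arctan u"
  using arctan_series by (simp add: Ti_def mult.commute add.commute)

lemma Ti_at_zero [simp]: "Ti s 0 = 0"
  by (simp add: Ti_def)

lemma Ti_has_real_derivative:
  assumes "u \<noteq> 0" "\<bar>u\<bar> < 1" "1 \<le> s"
  shows "(Ti (Suc s) has_real_derivative Ti s u / u) (at u)"
proof -
  have coeff: "(-1) ^ k / (2 * real k + 1) ^ Suc s * (2 * real k + 1) = (-1) ^ k / (2 * real k + 1) ^ s"
    for k by (simp add: add_pos_nonneg)
  have Ti_eq: "Ti (Suc s) = (\<lambda>x. \<Sum>k. ((-1) ^ k / (2 * real k + 1) ^ Suc s) * x ^ (2 * k + 1))"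
    by (simp add: Ti_def fun_eq_iff)
  have "\<bar>(-1) ^ k / (2 * real k + 1) ^ Suc s * (2 * real k + 1)\<bar> \<le> 1" for k
    unfolding coeff by (simp add: abs_mult add_pos_nonneg)
  from odd_powser_has_real_derivative[OF this assms(2)]
  have "(Ti (Suc s) has_real_derivative (\<Sum>k. (-1) ^ k / (2 * real k + 1) ^ s * u ^ (2 * k))) (at u)"
    unfolding Ti_eq coeff .
  moreover have "(\<lambda>k. (-1) ^ k / (2 * real k + 1) ^ s * u ^ (2 * k)) sums (Ti s u / u)"
  proof -
    have "(\<lambda>k. (-1) ^ k * u ^ (2 * k + 1) / (2 * real k + 1) ^ s / u) sums (Ti s u / u)"
      using assms by (intro sums_divide Ti_sums) auto
    moreover have "(-1) ^ k * u ^ (2 * k + 1) / (2 * real k + 1) ^ s / u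
        = (-1) ^ k / (2 * real k + 1) ^ s * u ^ (2 * k)" for k
      using assms(1) by simp
    ultimately show ?thesis by simp
  qed
  ultimately show ?thesis
    by (simp add: sums_iff)
qed

lemma Ti_continuous_on:
  assumes "2 \<le> s"
  shows "continuous_on {-1..1} (Ti s)"
proof -
  have "Ti s = (\<lambda>x. \<Sum>k. ((-1) ^ k / (2 * real k + 1) ^ s) * x ^ (2 * k + 1))"
    by (simp add: Ti_def fun_eq_iff)
  moreover have "summable (\<lambda>k. \<bar>(-1) ^ k / (2 * real k + 1) ^ s\<bar>)"
    using summable_inverse_odd_powers[OF assms] by (simp add: abs_mult add_pos_nonneg)
  ultimately show ?thesis by (simp only: odd_powser_continuous_on)
qed

lemma Ti_3_one: "Ti 3 1 = pi ^ 3 / 32"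
proof -
  have Polygamma_2_sums: "(\<lambda>k. inverse ((a + real k) ^ 3)) sums (- Polygamma 2 a / 2)" if "a > 0" for a :: real
    using Polygamma_LIMSEQ[of a 2] that by (simp add: fact_numeral)
  have "(\<lambda>k. (inverse ((1 / 4 + real k) ^ 3) - inverse ((3 / 4 + real k) ^ 3)) / 64)
      sums ((- Polygamma 2 (1 / 4) / 2 - - Polygamma 2 (3 / 4) / 2) / 64)"
    by (intro sums_divide sums_diff Polygamma_2_sums) auto
  also have "(- Polygamma 2 (1 / 4) / 2 - - Polygamma 2 (3 / 4) / 2) / 64 = pi ^ 3 / 32"
    using Polygamma_2_reflection_quarter by simp
  finally have "(\<lambda>k. (inverse ((1 / 4 + real k) ^ 3) - inverse ((3 / 4 + real k) ^ 3)) / 64) sums (pi ^ 3 / 32)" .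
  moreover have "(inverse ((1 / 4 + real k) ^ 3) - inverse ((3 / 4 + real k) ^ 3)) / 64
      = 1 / (4 * real k + 1) ^ 3 - 1 / (4 * real k + 3) ^ 3" for k
  proof -
    have "(4 * real k + 1) ^ 3 = 64 * (1 / 4 + real k) ^ 3" "(4 * real k + 3) ^ 3 = 64 * (3 / 4 + real k) ^ 3"
      by (simp only: power3_eq_cube; algebra)+
    thus ?thesis by (simp add: field_simps)
  qed
  ultimately have "(\<lambda>k. 1 / (4 * real k + 1) ^ 3 - 1 / (4 * real k + 3) ^ 3) sums (pi ^ 3 / 32)"
    by simp
  moreover have "(\<lambda>k. 1 / (4 * real k + 1) ^ 3 - 1 / (4 * real k + 3) ^ 3) sums Ti 3 1"
  proof -
    have "(\<lambda>n. \<Sum>k = n * 2..<n * 2 + 2. (-1) ^ k * 1 ^ (2 * k + 1) / (2 * real k + 1) ^ 3) sums Ti 3 1"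
      by (rule sums_group[OF Ti_sums]) auto
    moreover have "{n * 2..<n * 2 + 2} = {2 * n, 2 * n + 1}" for n :: nat by auto
    ultimately show ?thesis by (simp add: algebra_simps)
  qed
  ultimately show ?thesis by (simp add: sums_iff)
qed

section \<open>The double integral\<close>

definition log_sin_kernel :: "real \<Rightarrow> real \<Rightarrow> real" where
  "log_sin_kernel x u = 4 * u * (1 - u ^ 2) * cos x / ((1 + u ^ 2) * (1 - 2 * u ^ 2 * cos (2 * x) + u ^ 4))"

lemma log_sin_kernel_denominator_eq:
  fixes u x :: real
  shows "1 - 2 * u ^ 2 * cos (2 * x) + u ^ 4 = (1 - u ^ 2) ^ 2 + (2 * u * sin x) ^ 2"
  unfolding cos_double_sin by (simp add: algebra_simps power2_eq_square power4_eq_xxxx)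

lemma log_sin_kernel_denominator_pos:
  fixes u x :: real
  assumes "sin x \<noteq> 0"
  shows "0 < 1 - 2 * u ^ 2 * cos (2 * x) + u ^ 4"
proof (cases "u = 0")
  case False
  hence "0 < (2 * u * sin x) ^ 2" using assms by simp
  thus ?thesis unfolding log_sin_kernel_denominator_eq by (simp add: add_nonneg_pos)
qed simp

lemma log_sin_kernel_nonneg:
  assumes "0 \<le> cos x" "sin x \<noteq> 0" "0 \<le> u" "u \<le> 1"
  shows "0 \<le> log_sin_kernel x u"
proof -
  have "u ^ 2 \<le> 1" using assms by (simp add: power_le_one)
  thus ?thesis
    using assms log_sin_kernel_denominator_pos[OF assms(2), of u] unfolding log_sin_kernel_def
    by (intro divide_nonneg_pos mult_nonneg_nonneg mult_pos_pos) (auto simp: add_pos_nonneg)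
qed

lemma log_sin_kernel_primitive:
  fixes x u :: real
  assumes sin: "sin x \<noteq> 0" and cos: "cos x \<noteq> 0"
  shows "((\<lambda>u. (ln (1 + u ^ 2) - ln (1 - 2 * u ^ 2 * cos (2 * x) + u ^ 4) / 2) / cos x)
           has_real_derivative log_sin_kernel x u) (at u)"
proof -
  define c where "c = cos (2 * x)"
  define D where "D u = 1 - 2 * u ^ 2 * c + u ^ 4" for u
  have D_pos: "0 < D u"
    using log_sin_kernel_denominator_pos[OF sin] by (simp add: D_def c_def)
  have "((\<lambda>u. ln (1 + u ^ 2)) has_real_derivative 2 * u / (1 + u ^ 2)) (at u)"
    by (auto intro!: derivative_eq_intros simp: add_pos_nonneg field_simps power2_eq_square)
  moreover have "((\<lambda>u. ln (D u)) has_real_derivative (4 * u ^ 3 - 4 * c * u) / D u) (at u)"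
    using D_pos unfolding D_def
    by (auto intro!: derivative_eq_intros simp: field_simps power2_eq_square power3_eq_cube numeral_eq_Suc)
  ultimately have "((\<lambda>u. (ln (1 + u ^ 2) - ln (D u) / 2) / cos x) has_real_derivative
      (2 * u / (1 + u ^ 2) - (4 * u ^ 3 - 4 * c * u) / D u / 2) / cos x) (at u)"
    by (intro DERIV_cdivide DERIV_diff)
  moreover have "2 * u / (1 + u ^ 2) - (4 * u ^ 3 - 4 * c * u) / D u / 2
      = 2 * u * (1 + c) * (1 - u ^ 2) / ((1 + u ^ 2) * D u)"
  proof -
    have "1 + u ^ 2 \<noteq> 0" using zero_le_power2[of u] by linarith
    thus ?thesis using D_pos unfolding D_def by (simp add: divide_simps) algebra
  qed
  moreover have "2 * u * (1 + c) * (1 - u ^ 2) / ((1 + u ^ 2) * D u) / cos x = log_sin_kernel x u"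
  proof -
    have "1 + c = 2 * cos x ^ 2" by (simp add: c_def cos_double_cos)
    moreover have "2 * u * (2 * cos x ^ 2) * (1 - u ^ 2) / B / cos x = 4 * u * (1 - u ^ 2) * cos x / B" for B
      using cos by (cases "B = 0") (simp_all add: field_simps power2_eq_square)
    ultimately show ?thesis by (simp add: log_sin_kernel_def D_def c_def)
  qed
  ultimately show ?thesis by (simp add: D_def c_def)
qed

lemma has_integral_log_sin_kernel_u:
  assumes sin: "0 < sin x" and cos: "cos x \<noteq> 0"
  shows "((\<lambda>u. log_sin_kernel x u) has_integral - ln (sin x) / cos x) {0..1}"
proof -
  define F where "F u = (ln (1 + u ^ 2) - ln (1 - 2 * u ^ 2 * cos (2 * x) + u ^ 4) / 2) / cos x" for u
  have "((\<lambda>u. log_sin_kernel x u) has_integral (F 1 - F 0)) {0..1}"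
    using log_sin_kernel_primitive[of x] sin cos unfolding F_def [abs_def]
    by (intro fundamental_theorem_of_calculus)
       (auto intro: has_field_derivative_at_within simp flip: has_real_derivative_iff_has_vector_derivative)
  moreover have "ln (1 - 2 * 1 ^ 2 * cos (2 * x) + 1 ^ 4) = 2 * ln 2 + 2 * ln (sin x)"
    using sin log_sin_kernel_denominator_eq[of 1 x] ln_realpow[of 2 2] by (simp add: ln_realpow ln_mult)
  ultimately show ?thesis by (simp add: F_def field_simps)
qed

lemma poisson_denominator_pos:
  fixes q y :: real
  assumes "\<bar>q\<bar> < 1"
  shows "0 < 1 - 2 * q * cos y + q ^ 2"
proof -
  have "q * cos y \<le> \<bar>q\<bar>"
    using abs_cos_le_one[of y] by (metis abs_ge_self abs_mult mult_left_le order_trans abs_ge_zero)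
  moreover have "0 < (1 - \<bar>q\<bar>) ^ 2" using assms by simp
  ultimately show ?thesis by (simp add: power2_eq_square algebra_simps)
qed

lemma cos_odd_multiples_partial_sum:
  fixes q x :: real
  shows "(1 - 2 * q * cos (2 * x) + q ^ 2) * (\<Sum>N<M. q ^ N * cos ((2 * real N + 1) * x))
     = (1 - q) * cos x - q ^ M * cos ((2 * real M + 1) * x) + q ^ (M + 1) * cos ((2 * real M + 1) * x - 2 * x)"
proof (induction M)
  case (Suc M)
  define a where "a = (2 * real M + 1) * x"
  have a_Suc: "(2 * real (Suc M) + 1) * x = a + 2 * x" "(2 * real (Suc M) + 1) * x - 2 * x = a"
    by (simp_all add: a_def algebra_simps)
  have "(1 - 2 * q * cos (2 * x) + q ^ 2) * (\<Sum>N<Suc M. q ^ N * cos ((2 * real N + 1) * x))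
      = (1 - q) * cos x - q ^ M * cos a + q ^ (M + 1) * cos (a - 2 * x)
        + (1 - 2 * q * cos (2 * x) + q ^ 2) * (q ^ M * cos a)"
    using Suc.IH by (simp add: a_def algebra_simps)
  also have "\<dots> = (1 - q) * cos x + q ^ (M + 1) * (cos (a - 2 * x) - 2 * cos (2 * x) * cos a) + q ^ (M + 2) * cos a"
    by (simp add: algebra_simps power2_eq_square)
  also have "cos (a - 2 * x) - 2 * cos (2 * x) * cos a = - cos (a + 2 * x)"
    by (simp add: cos_add cos_diff algebra_simps)
  finally show ?case
    unfolding a_Suc by simp
qed (simp add: algebra_simps)

lemma cos_odd_multiples_sums:
  fixes q x :: real
  assumes q: "\<bar>q\<bar> < 1"
  shows "(\<lambda>N. q ^ N * cos ((2 * real N + 1) * x)) sums ((1 - q) * cos x / (1 - 2 * q * cos (2 * x) + q ^ 2))"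
proof -
  define D where "D = 1 - 2 * q * cos (2 * x) + q ^ 2"
  have D: "0 < D" unfolding D_def using q by (rule poisson_denominator_pos)
  have vanish: "(\<lambda>M. q ^ M * cos (y M)) \<longlonglongrightarrow> 0" for y :: "nat \<Rightarrow> real"
  proof (rule Lim_null_comparison[where g = "\<lambda>M. \<bar>q\<bar> ^ M"])
    show "\<forall>\<^sub>F M in sequentially. norm (q ^ M * cos (y M)) \<le> \<bar>q\<bar> ^ M"
      by (intro always_eventually allI) (simp add: abs_mult power_abs mult_left_le)
    show "(\<lambda>M. \<bar>q\<bar> ^ M) \<longlonglongrightarrow> 0" using q by (intro LIMSEQ_power_zero) auto
  qed
  have "(\<lambda>M. ((1 - q) * cos x - q ^ M * cos ((2 * real M + 1) * x)
                + q * (q ^ M * cos ((2 * real M + 1) * x - 2 * x))) / D)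
        \<longlonglongrightarrow> ((1 - q) * cos x - 0 + q * 0) / D"
    by (intro tendsto_intros vanish) (use D in simp)
  moreover have "(\<Sum>N<M. q ^ N * cos ((2 * real N + 1) * x))
      = ((1 - q) * cos x - q ^ M * cos ((2 * real M + 1) * x)
          + q * (q ^ M * cos ((2 * real M + 1) * x - 2 * x))) / D" for M
    using cos_odd_multiples_partial_sum[of q x M] D by (simp add: D_def field_simps)
  ultimately show ?thesis by (simp add: sums_def D_def)
qed

lemma cos_odd_multiples_partial_sum_bound:
  fixes q x :: real
  assumes "\<bar>q\<bar> < 1"
  shows "\<bar>\<Sum>N<M. q ^ N * cos ((2 * real N + 1) * x)\<bar> \<le> 1 / (1 - \<bar>q\<bar>)"
proof -
  have "\<bar>\<Sum>N<M. q ^ N * cos ((2 * real N + 1) * x)\<bar> \<le> (\<Sum>N<M. \<bar>q\<bar> ^ N)"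
    by (rule order_trans[OF sum_abs sum_mono]) (simp add: abs_mult power_abs mult_left_le)
  also have "\<dots> = (1 - \<bar>q\<bar> ^ M) / (1 - \<bar>q\<bar>)"
    using assms by (simp add: sum_gp_strict)
  also have "\<dots> \<le> 1 / (1 - \<bar>q\<bar>)"
    using assms by (intro divide_right_mono) auto
  finally show ?thesis .
qed

lemma has_integral_sqr_cos_odd_multiple:
  "((\<lambda>x. x ^ 2 * cos ((2 * real N + 1) * x)) has_integral
      ((-1) ^ N * (pi ^ 2 / (4 * (2 * real N + 1)) - 2 / (2 * real N + 1) ^ 3))) {0..pi/2}"
proof -
  define k where "k = 2 * real N + 1"
  have k: "k > 0" by (simp add: k_def add_pos_nonneg)
  define G where "G x = x ^ 2 * sin (k * x) / k + 2 * x * cos (k * x) / k ^ 2 - 2 * sin (k * x) / k ^ 3" for x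
  have "(G has_real_derivative x ^ 2 * cos (k * x)) (at x)" for x
  proof -
    have "(G has_real_derivative 2 * x * sin (k * x) / k + x ^ 2 * (cos (k * x) * k) / k
        + (2 * cos (k * x) - 2 * x * (sin (k * x) * k)) / k ^ 2 - 2 * (cos (k * x) * k) / k ^ 3) (at x)"
      unfolding G_def by (auto intro!: derivative_eq_intros simp: field_simps)
    thus ?thesis
      using k by (simp add: field_simps power2_eq_square power3_eq_cube)
  qed
  hence "((\<lambda>x. x ^ 2 * cos (k * x)) has_integral (G (pi / 2) - G 0)) {0..pi/2}"
    by (intro fundamental_theorem_of_calculus)
       (auto intro: has_field_derivative_at_within simp flip: has_real_derivative_iff_has_vector_derivative)
  moreover have k_half_pi: "k * (pi / 2) = real N * pi + pi / 2" by (simp add: k_def algebra_simps)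
  have "sin (k * (pi / 2)) = (-1) ^ N" "cos (k * (pi / 2)) = 0"
    unfolding k_half_pi by (simp_all add: sin_add cos_add)
  hence "G (pi / 2) - G 0 = (-1) ^ N * (pi ^ 2 / (4 * k) - 2 / k ^ 3)"
    by (simp add: G_def field_simps power2_eq_square)
  ultimately show ?thesis by (simp add: k_def)
qed

lemma arctan_Ti_3_sums:
  assumes u: "\<bar>u\<bar> \<le> 1"
  shows "(\<lambda>N. u * ((u ^ 2) ^ N * ((-1) ^ N * (pi ^ 2 / (4 * (2 * real N + 1)) - 2 / (2 * real N + 1) ^ 3))))
           sums (pi ^ 2 / 4 * arctan u - 2 * Ti 3 u)"
proof -
  have "(\<lambda>N. pi ^ 2 / 4 * ((-1) ^ N * u ^ (2 * N + 1) / (2 * real N + 1) ^ 1)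
           - 2 * ((-1) ^ N * u ^ (2 * N + 1) / (2 * real N + 1) ^ 3))
        sums (pi ^ 2 / 4 * arctan u - 2 * Ti 3 u)"
  proof (intro sums_diff sums_mult)
    show "(\<lambda>N. (-1) ^ N * u ^ (2 * N + 1) / (2 * real N + 1) ^ 1) sums arctan u"
      using Ti_sums[of u 1] Ti_1_eq_arctan[of u] u by simp
    show "(\<lambda>N. (-1) ^ N * u ^ (2 * N + 1) / (2 * real N + 1) ^ 3) sums Ti 3 u"
      using u by (intro Ti_sums) auto
  qed
  moreover have "pi ^ 2 / 4 * ((-1) ^ N * u ^ (2 * N + 1) / (2 * real N + 1) ^ 1)
           - 2 * ((-1) ^ N * u ^ (2 * N + 1) / (2 * real N + 1) ^ 3)
      = u * ((u ^ 2) ^ N * ((-1) ^ N * (pi ^ 2 / (4 * (2 * real N + 1)) - 2 / (2 * real N + 1) ^ 3)))" for N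
    by (simp add: field_simps power_add flip: power_mult)
  ultimately show ?thesis by simp
qed

lemma has_integral_sqr_cos_odd_multiples_partial_sum:
  "((\<lambda>x. x ^ 2 * (\<Sum>N<M. q ^ N * cos ((2 * real N + 1) * x))) has_integral
      (\<Sum>N<M. q ^ N * ((-1) ^ N * (pi ^ 2 / (4 * (2 * real N + 1)) - 2 / (2 * real N + 1) ^ 3)))) {0..pi/2}"
  using has_integral_sum[OF finite_lessThan,
      OF has_integral_mult_right[OF has_integral_sqr_cos_odd_multiple]]
  by (simp add: sum_distrib_left mult_ac)

lemma has_integral_log_sin_kernel_x:
  assumes u: "\<bar>u\<bar> < 1"
  shows "((\<lambda>x. x ^ 2 * log_sin_kernel x u) has_integral
           4 / (1 + u ^ 2) * (pi ^ 2 / 4 * arctan u - 2 * Ti 3 u)) {0..pi/2}"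
proof -
  define q where "q = u ^ 2"
  have q: "\<bar>q\<bar> < 1" using u by (simp add: q_def abs_square_less_1)
  define C where "C = 4 * u / (1 + u ^ 2)"
  define c where "c N = (-1) ^ N * (pi ^ 2 / (4 * (2 * real N + 1)) - 2 / (2 * real N + 1) ^ 3)" for N
  define S where "S M x = (\<Sum>N<M. q ^ N * cos ((2 * real N + 1) * x))" for M x
  have "((\<lambda>x. C * (x ^ 2 * S M x)) has_integral C * (\<Sum>N<M. q ^ N * c N)) {0..pi/2}" for M
    unfolding S_def c_def by (intro has_integral_mult_right has_integral_sqr_cos_odd_multiples_partial_sum)
  moreover have "(\<lambda>x. \<bar>C\<bar> * (x ^ 2 * (1 / (1 - \<bar>q\<bar>)))) integrable_on {0..pi/2}"
    by (intro integrable_continuous_interval continuous_intros)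
  moreover have "\<forall>x\<in>{0..pi/2}. norm (C * (x ^ 2 * S M x)) \<le> \<bar>C\<bar> * (x ^ 2 * (1 / (1 - \<bar>q\<bar>)))" for M
  proof
    fix x :: real
    have "\<bar>S M x\<bar> \<le> 1 / (1 - \<bar>q\<bar>)"
      unfolding S_def by (rule cos_odd_multiples_partial_sum_bound[OF q])
    hence "\<bar>C\<bar> * (x ^ 2 * \<bar>S M x\<bar>) \<le> \<bar>C\<bar> * (x ^ 2 * (1 / (1 - \<bar>q\<bar>)))"
      by (intro mult_left_mono) auto
    thus "norm (C * (x ^ 2 * S M x)) \<le> \<bar>C\<bar> * (x ^ 2 * (1 / (1 - \<bar>q\<bar>)))"
      by (simp add: abs_mult)
  qed
  moreover have "\<forall>x\<in>{0..pi/2}. (\<lambda>M. C * (x ^ 2 * S M x)) \<longlonglongrightarrow> x ^ 2 * log_sin_kernel x u"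
  proof
    fix x :: real
    have "(\<lambda>M. C * (x ^ 2 * S M x)) \<longlonglongrightarrow> C * (x ^ 2 * ((1 - q) * cos x / (1 - 2 * q * cos (2 * x) + q ^ 2)))"
      using cos_odd_multiples_sums[OF q, of x] unfolding S_def sums_def by (intro tendsto_intros)
    also have "C * (x ^ 2 * ((1 - q) * cos x / (1 - 2 * q * cos (2 * x) + q ^ 2))) = x ^ 2 * log_sin_kernel x u"
      by (simp add: C_def q_def log_sin_kernel_def)
    finally show "(\<lambda>M. C * (x ^ 2 * S M x)) \<longlonglongrightarrow> x ^ 2 * log_sin_kernel x u" .
  qed
  moreover have "(\<lambda>M. C * (\<Sum>N<M. q ^ N * c N)) \<longlonglongrightarrow> 4 / (1 + u ^ 2) * (pi ^ 2 / 4 * arctan u - 2 * Ti 3 u)"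
  proof -
    have "(\<lambda>N. u * (q ^ N * c N)) sums (pi ^ 2 / 4 * arctan u - 2 * Ti 3 u)"
      unfolding q_def c_def using u by (intro arctan_Ti_3_sums) simp
    hence "(\<lambda>M. 4 / (1 + u ^ 2) * (\<Sum>N<M. u * (q ^ N * c N)))
        \<longlonglongrightarrow> 4 / (1 + u ^ 2) * (pi ^ 2 / 4 * arctan u - 2 * Ti 3 u)"
      unfolding sums_def by (intro tendsto_intros)
    thus ?thesis by (simp add: C_def sum_distrib_left mult_ac)
  qed
  ultimately show ?thesis
    by (rule has_integral_dominated_convergence)
qed

lemma has_integral_arctan_Ti_3:
  "((\<lambda>u. 4 / (1 + u ^ 2) * (pi ^ 2 / 4 * arctan u - 2 * Ti 3 u)) has_integral
     (pi ^ 4 / 32 - 2 * pi * Ti 3 1 + 4 * Ti 2 1 ^ 2)) {0..1}"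
proof -
  define \<Phi> where "\<Phi> u = pi ^ 2 / 2 * arctan u ^ 2 - 8 * Ti 3 u * arctan u + 4 * Ti 2 u ^ 2" for u
  have "continuous_on {0..1} \<Phi>"
    unfolding \<Phi>_def
    by (intro continuous_intros continuous_on_subset[OF Ti_continuous_on]) auto
  moreover have "(\<Phi> has_vector_derivative 4 / (1 + u ^ 2) * (pi ^ 2 / 4 * arctan u - 2 * Ti 3 u)) (at u)"
    if "u \<in> {0<..<1}" for u
  proof -
    have u: "u \<noteq> 0" "\<bar>u\<bar> < 1" using that by auto
    have "(Ti 2 has_real_derivative arctan u / u) (at u)"
      using Ti_has_real_derivative[OF u, of 1] Ti_1_eq_arctan[of u] u by (simp add: numeral_2_eq_2)
    moreover have "(Ti 3 has_real_derivative Ti 2 u / u) (at u)"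
      using Ti_has_real_derivative[OF u, of 2] by (simp add: numeral_3_eq_3 numeral_2_eq_2)
    ultimately have "(\<Phi> has_real_derivative
        pi ^ 2 / 2 * (2 * arctan u * inverse (1 + u ^ 2)) - 8 * (Ti 2 u / u * arctan u + Ti 3 u * inverse (1 + u ^ 2))
        + 4 * (2 * Ti 2 u * (arctan u / u))) (at u)"
      unfolding \<Phi>_def by (auto intro!: derivative_eq_intros simp: power2_eq_square)
    moreover have "pi ^ 2 / 2 * (2 * arctan u * inverse w) - 8 * (Ti 2 u / u * arctan u + Ti 3 u * inverse w)
        + 4 * (2 * Ti 2 u * (arctan u / u)) = 4 / w * (pi ^ 2 / 4 * arctan u - 2 * Ti 3 u)" for w
      using u by (simp add: divide_simps inverse_eq_divide) (simp add: algebra_simps)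
    ultimately show ?thesis
      by (simp add: has_real_derivative_iff_has_vector_derivative)
  qed
  ultimately have "((\<lambda>u. 4 / (1 + u ^ 2) * (pi ^ 2 / 4 * arctan u - 2 * Ti 3 u)) has_integral (\<Phi> 1 - \<Phi> 0)) {0..1}"
    by (intro fundamental_theorem_of_calculus_interior) auto
  thus ?thesis by (simp add: \<Phi>_def power2_eq_square power4_eq_xxxx field_simps)
qed

lemma has_integral_sqr_sec_log_sin_Ti:
  "((\<lambda>x. - (x ^ 2 * (1 / cos x) * ln (sin x))) has_integral
      (pi ^ 4 / 32 - 2 * pi * Ti 3 1 + 4 * Ti 2 1 ^ 2)) {0<..<pi/2}"
proof (rule has_integral_swap_nonneg[where f = "\<lambda>x u. x ^ 2 * log_sin_kernel x u" and T = "{0<..<1}"])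
  show "(\<lambda>(x, u). x ^ 2 * log_sin_kernel x u) \<in> borel_measurable (lborel \<Otimes>\<^sub>M lborel)"
    unfolding log_sin_kernel_def by measurable
  fix x u :: real assume "x \<in> {0<..<pi/2}"
  hence sin: "0 < sin x" and cos: "0 < cos x"
    by (auto intro!: sin_gt_zero cos_gt_zero)
  show "0 \<le> x ^ 2 * log_sin_kernel x u" if "u \<in> {0<..<1}"
    using that sin cos by (intro mult_nonneg_nonneg log_sin_kernel_nonneg) auto
  show "((\<lambda>u. x ^ 2 * log_sin_kernel x u) has_integral - (x ^ 2 * (1 / cos x) * ln (sin x))) {0<..<1}"
    using has_integral_mult_right[OF has_integral_log_sin_kernel_u[OF sin], of "x ^ 2"] cos
    by (simp add: has_integral_Icc_iff_Ioo)
next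
  fix u :: real assume "u \<in> {0<..<1}"
  thus "((\<lambda>x. x ^ 2 * log_sin_kernel x u) has_integral
      4 / (1 + u ^ 2) * (pi ^ 2 / 4 * arctan u - 2 * Ti 3 u)) {0<..<pi/2}"
    using has_integral_log_sin_kernel_x[of u] by (simp add: has_integral_Icc_iff_Ioo)
qed (use has_integral_arctan_Ti_3 in \<open>auto simp: has_integral_Icc_iff_Ioo\<close>)

theorem lemma2:
  shows "((\<lambda>x::real. x ^ 2 * (1 / cos x) * ln (sin x)) has_integral
            (45 / 16 * zeta 4 - 4 * catalan ^ 2)) {0..pi/2}"
proof -
  have "catalan = Ti 2 1" by (simp add: catalan_def Ti_def)
  hence "- (pi ^ 4 / 32 - 2 * pi * Ti 3 1 + 4 * Ti 2 1 ^ 2) = 45 / 16 * zeta 4 - 4 * catalan ^ 2"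
    by (simp add: zeta_4 Ti_3_one power3_eq_cube power4_eq_xxxx)
  with has_integral_neg[OF has_integral_sqr_sec_log_sin_Ti] show ?thesis
    by (simp add: has_integral_Icc_iff_Ioo)
qed

end
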